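(* Each smooth function $K$ that Poisson commutes with $\xi$ and with $y\eta$ in a neighbourhood of a point $(x,y,\xi,\eta)=(x_0,0,0,0)$ is characterised by two smooth function germs $f_+,f_-\in C^\infty(\mathbb R^2,0)$ satisfying $f_-(\xi,t)-f_+(\xi,t)=O(t^\infty)$ locally uniformly in $\xi$, such that $$K(x,y,\xi,\eta)=\begin{cases}f_+(\xi,y\eta)&\text{if }y\ge0,\\ f_-(\xi,y\eta)&\text{if }y<0.\end{cases}$$
   Context: $(x,y,\xi,\eta)$ are canonical coordinates on $T^*\mathbb R^2$ (or on $T^*(S^1\times\mathbb R)$), with Poisson bracket $\{\cdot,\cdot\}$ induced by $d\xi\wedge dx+d\eta\wedge dy$. *)

theory Defs
  imports "HOL-Analysis.Analysis"
begin

fun Ck_on :: "nat \<Rightarrow> ('a::real_normed_vector \<Rightarrow> real) \<Rightarrow> 'a set \<Rightarrow> bool" where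
  "Ck_on 0 f S = continuous_on S f"
| "Ck_on (Suc n) f S =
     (\<exists>f'. (\<forall>x\<in>S. (f has_derivative f' x) (at x)) \<and> (\<forall>v. Ck_on n (\<lambda>x. f' x v) S))"

definition smooth_on :: "('a::real_normed_vector \<Rightarrow> real) \<Rightarrow> 'a set \<Rightarrow> bool" where
  "smooth_on f S \<longleftrightarrow> (\<forall>n. Ck_on n f S)"

text \<open>Points of T*R^2 are written (x, y, xi, eta).\<close>
type_synonym phase = "real \<times> real \<times> real \<times> real"

definition dx :: phase where "dx = (1, 0, 0, 0)"
definition dy :: phase where "dy = (0, 1, 0, 0)"
definition dxi :: phase where "dxi = (0, 0, 1, 0)"
definition deta :: phase where "deta = (0, 0, 0, 1)"

text \<open>Poisson bracket induced by d xi /\ dx + d eta /\ dy.\<close>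
definition poisson :: "(phase \<Rightarrow> real) \<Rightarrow> (phase \<Rightarrow> real) \<Rightarrow> phase \<Rightarrow> real" where
  "poisson F G p =
     frechet_derivative F (at p) dxi * frechet_derivative G (at p) dx
   - frechet_derivative F (at p) dx * frechet_derivative G (at p) dxi
   + frechet_derivative F (at p) deta * frechet_derivative G (at p) dy
   - frechet_derivative F (at p) dy * frechet_derivative G (at p) deta"

end

theory Submission
  imports Defs
begin

text \<open>
  The Hamiltonian flows of \<open>xi\<close> and \<open>y * eta\<close> are the translations in \<open>x\<close> and the hyperbolic
  flow \<open>(y, eta) \<mapsto> (y * exp \<tau>, eta * exp (- \<tau>))\<close>, and \<open>K\<close> is invariant under both. On a small cube
  around \<open>(x0, 0, 0, 0)\<close> it therefore does not depend on \<open>x\<close>, and on each half \<open>y > 0\<close>,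
  \<open>y < 0\<close> it is constant along the hyperbolas \<open>y * eta = t\<close>; so it equals \<open>f\<^sub>\<plusminus>(xi, y * eta)\<close>,
  where \<open>f\<^sub>\<plusminus>\<close> is \<open>K\<close> restricted to the slice \<open>y = \<plusminus>s\<close>. On \<open>y = 0\<close> the invariance extends along
  the axes, giving \<open>f\<^sub>+(xi, 0)\<close>.

  For flatness, \<open>t \<mapsto> K (x0, t / s, xi, s) - f\<^sub>+(xi, t)\<close> is smooth, vanishes for \<open>t > 0\<close> and
  equals \<open>f\<^sub>-(xi, t) - f\<^sub>+(xi, t)\<close> for \<open>t < 0\<close>. Hence all its \<open>t\<close>-derivatives vanish at
  \<open>t = 0\<close>, and Taylor's formula with a bound on the \<open>n\<close>-th derivative that is uniform in \<open>xi\<close>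
  (by compactness) gives \<open>\<bar>f\<^sub>- - f\<^sub>+\<bar> \<le> C \<bar>t\<bar>\<^sup>n\<close>; the slice \<open>eta = -s\<close> handles \<open>t > 0\<close>.
\<close>

lemma Ck_on_subset:
  assumes "Ck_on n f S" and "T \<subseteq> S"
  shows "Ck_on n f T"
  using assms
proof (induction n arbitrary: f)
  case 0
  then show ?case by (auto intro: continuous_on_subset)
next
  case (Suc n)
  then obtain f' where "\<forall>x\<in>S. (f has_derivative f' x) (at x)" "\<forall>v. Ck_on n (\<lambda>x. f' x v) S"
    by auto
  with Suc.IH Suc.prems(2) show ?case
    by (intro Ck_on.simps(2)[THEN iffD2] exI[of _ f'] conjI allI ballI) auto
qed

lemma smooth_on_subset: "smooth_on f S \<Longrightarrow> T \<subseteq> S \<Longrightarrow> smooth_on f T"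
  unfolding smooth_on_def using Ck_on_subset by blast

lemma Ck_on_diff:
  assumes "Ck_on n f S" and "Ck_on n g S"
  shows "Ck_on n (\<lambda>x. f x - g x) S"
  using assms
proof (induction n arbitrary: f g)
  case 0
  then show ?case by (auto intro: continuous_on_diff)
next
  case (Suc n)
  then obtain f' g' where
    "\<forall>x\<in>S. (f has_derivative f' x) (at x)" "\<forall>v. Ck_on n (\<lambda>x. f' x v) S"
    "\<forall>x\<in>S. (g has_derivative g' x) (at x)" "\<forall>v. Ck_on n (\<lambda>x. g' x v) S"
    by auto
  then show ?case
    by (intro Ck_on.simps(2)[THEN iffD2] exI[of _ "\<lambda>x v. f' x v - g' x v"] conjI allI ballI
        has_derivative_diff Suc.IH) auto
qed

lemma Ck_on_compose_affine:
  fixes L :: "'b::real_normed_vector \<Rightarrow> 'a::real_normed_vector"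
  assumes "bounded_linear L" and "Ck_on n f S" and "\<And>w. w \<in> T \<Longrightarrow> L w + c \<in> S"
  shows "Ck_on n (\<lambda>w. f (L w + c)) T"
  using assms(2,3)
proof (induction n arbitrary: f)
  case 0
  have "continuous_on T (\<lambda>w. L w + c)"
    using assms(1) by (intro continuous_intros) (simp add: linear_continuous_on)
  with 0 show ?case by (auto intro: continuous_on_compose2)
next
  case (Suc n)
  then obtain f' where f': "\<forall>x\<in>S. (f has_derivative f' x) (at x)"
    and Ck: "\<forall>v. Ck_on n (\<lambda>x. f' x v) S"
    by auto
  have "((\<lambda>w. f (L w + c)) has_derivative (\<lambda>v. f' (L w + c) (L v))) (at w)" if "w \<in> T" for w
  proof (rule has_derivative_compose[of "\<lambda>w. L w + c"])
    show "((\<lambda>w. L w + c) has_derivative L) (at w)"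
      using assms(1) by (auto intro!: derivative_eq_intros bounded_linear_imp_has_derivative)
    show "(f has_derivative f' (L w + c)) (at (L w + c))"
      using f' Suc.prems(2)[OF that] by blast
  qed
  moreover have "Ck_on n (\<lambda>w. f' (L w + c) (L v)) T" for v
    using Suc.IH Ck Suc.prems(2) by blast
  ultimately show ?case
    by (auto intro!: exI[of _ "\<lambda>w v. f' (L w + c) (L v)"])
qed

lemma smooth_on_compose_affine:
  fixes L :: "'b::real_normed_vector \<Rightarrow> 'a::real_normed_vector"
  assumes "bounded_linear L" and "smooth_on f S" and "\<And>w. w \<in> T \<Longrightarrow> L w + c \<in> S"
  shows "smooth_on (\<lambda>w. f (L w + c)) T"
  using assms Ck_on_compose_affine unfolding smooth_on_def by blast

lemma has_real_derivative_along_line: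
  fixes f :: "'a::real_normed_vector \<Rightarrow> real"
  assumes "(f has_derivative f') (at (p + t *\<^sub>R v))"
  shows "((\<lambda>t. f (p + t *\<^sub>R v)) has_real_derivative f' v) (at t)"
proof -
  have "((\<lambda>t. p + t *\<^sub>R v) has_derivative (\<lambda>h. h *\<^sub>R v)) (at t)"
    by (auto intro!: derivative_eq_intros)
  from has_derivative_compose[OF this assms]
  have "((\<lambda>t. f (p + t *\<^sub>R v)) has_derivative (\<lambda>h. f' (h *\<^sub>R v))) (at t)" .
  moreover have "(\<lambda>h. f' (h *\<^sub>R v)) = (\<lambda>h. f' v * h)"
    using has_derivative_bounded_linear[OF assms] by (simp add: fun_eq_iff linear_simps)
  ultimately show ?thesis by (simp add: has_field_derivative_def)
qed

lemma Ck_on_directional_derivatives: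
  fixes f :: "'a::real_normed_vector \<Rightarrow> real"
  assumes "Ck_on n f S"
  shows "\<exists>D. D 0 = f
    \<and> (\<forall>k<n. \<forall>p t. p + t *\<^sub>R v \<in> S \<longrightarrow>
        ((\<lambda>t. D k (p + t *\<^sub>R v)) has_real_derivative D (Suc k) (p + t *\<^sub>R v)) (at t))
    \<and> (\<forall>k\<le>n. continuous_on S (D k))"
  using assms
proof (induction n arbitrary: f)
  case 0
  then show ?case by (intro exI[of _ "\<lambda>k. f"]) auto
next
  case (Suc n)
  then obtain f' where f': "\<forall>x\<in>S. (f has_derivative f' x) (at x)"
    and "\<forall>v. Ck_on n (\<lambda>x. f' x v) S"
    by auto
  with Suc.IH obtain D where D: "D 0 = (\<lambda>x. f' x v)"
    "\<forall>k<n. \<forall>p t. p + t *\<^sub>R v \<in> S \<longrightarrow>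
        ((\<lambda>t. D k (p + t *\<^sub>R v)) has_real_derivative D (Suc k) (p + t *\<^sub>R v)) (at t)"
    "\<forall>k\<le>n. continuous_on S (D k)"
    by blast
  have "continuous_on S f"
    using f' by (meson continuous_at_imp_continuous_on has_derivative_continuous)
  show ?case
  proof (intro exI[of _ "case_nat f D"] conjI allI impI)
    fix k p t
    assume "k < Suc n" and "p + t *\<^sub>R v \<in> S"
    with f' D show "((\<lambda>t. case_nat f D k (p + t *\<^sub>R v)) has_real_derivative
        case_nat f D (Suc k) (p + t *\<^sub>R v)) (at t)"
      by (cases k) (auto intro: has_real_derivative_along_line)
  next
    fix k
    assume "k \<le> Suc n"
    with \<open>continuous_on S f\<close> D show "continuous_on S (case_nat f D k)"
      by (cases k) auto
  qed simp
qed

lemma derivatives_vanish_at_0_if_vanish_right: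
  fixes D :: "nat \<Rightarrow> real \<Rightarrow> real"
  assumes deriv: "\<And>k t. k < n \<Longrightarrow> \<bar>t\<bar> \<le> \<delta> \<Longrightarrow> (D k has_real_derivative D (Suc k) t) (at t)"
    and vanish: "\<And>t. 0 < t \<Longrightarrow> t < \<delta> \<Longrightarrow> D 0 t = 0"
    and "\<delta> > 0" and "k < n"
  shows "D k 0 = 0"
proof -
  have vanish_k: "D k t = 0" if "k < n" "0 < t" "t < \<delta>" for k t
    using that
  proof (induction k arbitrary: t)
    case 0
    then show ?case using vanish by simp
  next
    case (Suc k)
    have "(D k has_real_derivative D (Suc k) t) (at t)"
      using deriv Suc.prems by simp
    moreover have "\<forall>y. \<bar>t - y\<bar> < min t (\<delta> - t) \<longrightarrow> D k t = D k y"
      using Suc by (simp add: abs_less_iff)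
    ultimately show ?case
      using DERIV_local_const Suc.prems by (metis min_less_iff_conj diff_gt_0_iff_gt)
  qed
  have "isCont (D k) 0"
    using DERIV_isCont deriv[OF \<open>k < n\<close>, of 0] \<open>\<delta> > 0\<close> by simp
  then have "(D k \<longlongrightarrow> D k 0) (at_right 0)"
    by (simp add: isCont_def filterlim_at_split)
  moreover have "\<forall>\<^sub>F t in at_right 0. D k t = 0"
    using vanish_k \<open>k < n\<close> \<open>\<delta> > 0\<close> by (fastforce simp: eventually_at_right_field)
  then have "(D k \<longlongrightarrow> 0) (at_right 0)"
    by (rule tendsto_eventually)
  ultimately show ?thesis
    using tendsto_unique trivial_limit_at_right_real by blast
qed

lemma Maclaurin_bound_if_derivatives_vanish_at_0:
  fixes D :: "nat \<Rightarrow> real \<Rightarrow> real"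
  assumes "\<And>k t. k < n \<Longrightarrow> \<bar>t\<bar> \<le> \<delta> \<Longrightarrow> (D k has_real_derivative D (Suc k) t) (at t)"
    and "\<And>k. k < n \<Longrightarrow> D k 0 = 0"
    and "\<And>t. \<bar>t\<bar> \<le> \<delta> \<Longrightarrow> \<bar>D n t\<bar> \<le> M" and "\<bar>t\<bar> \<le> \<delta>"
  shows "\<bar>D 0 t\<bar> \<le> M / fact n * \<bar>t\<bar> ^ n"
proof -
  obtain u where "\<bar>u\<bar> \<le> \<bar>t\<bar>"
    and "D 0 t = (\<Sum>k<n. D k 0 / fact k * t ^ k) + D n u / fact n * t ^ n"
    using Maclaurin_bi_le[of D "D 0" n t] assms(1,4) by force
  with assms(2,3,4) have "\<bar>D 0 t\<bar> = \<bar>D n u\<bar> / fact n * \<bar>t\<bar> ^ n" and "\<bar>D n u\<bar> \<le> M"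
    by (auto simp: abs_mult power_abs)
  then show ?thesis
    by (simp add: divide_right_mono mult_right_mono)
qed

lemma Ck_on_flat_if_vanish_right:
  fixes g :: "'a::real_normed_vector \<times> real \<Rightarrow> real"
  assumes "Ck_on n g (A \<times> {-\<delta>..\<delta>})" and "compact A" and "\<delta> > 0"
    and vanish: "\<And>a t. a \<in> A \<Longrightarrow> 0 < t \<Longrightarrow> t < \<delta> \<Longrightarrow> g (a, t) = 0"
  shows "\<exists>C. \<forall>a\<in>A. \<forall>t. \<bar>t\<bar> \<le> \<delta> \<longrightarrow> \<bar>g (a, t)\<bar> \<le> C * \<bar>t\<bar> ^ n"
proof -
  obtain D where "D 0 = g"
    and deriv: "\<forall>k<n. \<forall>p t. p + t *\<^sub>R (0, 1) \<in> A \<times> {-\<delta>..\<delta>} \<longrightarrow>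
        ((\<lambda>t. D k (p + t *\<^sub>R (0, 1))) has_real_derivative D (Suc k) (p + t *\<^sub>R (0, 1))) (at t)"
    and "continuous_on (A \<times> {-\<delta>..\<delta>}) (D n)"
    using Ck_on_directional_derivatives[OF assms(1), of "(0, 1)"] by auto
  then have "compact (D n ` (A \<times> {-\<delta>..\<delta>}))"
    using assms(2) by (intro compact_continuous_image compact_Times) auto
  then obtain M where M: "\<And>w. w \<in> A \<times> {-\<delta>..\<delta>} \<Longrightarrow> \<bar>D n w\<bar> \<le> M"
    using compact_imp_bounded by (fastforce simp: bounded_iff)
  show ?thesis
  proof (intro exI[of _ "M / fact n"] ballI allI impI)
    fix a t
    assume "a \<in> A" and "\<bar>t\<bar> \<le> \<delta>"
    have deriv_a: "((\<lambda>t. D k (a, t)) has_real_derivative D (Suc k) (a, t)) (at t)"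
      if "k < n" and "\<bar>t\<bar> \<le> \<delta>" for k t
      using deriv[rule_format, OF that(1), of "(a, 0)" t] \<open>a \<in> A\<close> that(2) by (simp add: abs_le_iff)
    have "D k (a, 0) = 0" if "k < n" for k
      using derivatives_vanish_at_0_if_vanish_right[of n \<delta> "\<lambda>k t. D k (a, t)", OF deriv_a]
        vanish \<open>a \<in> A\<close> \<open>D 0 = g\<close> \<open>\<delta> > 0\<close> that by auto
    moreover have "\<bar>D n (a, s)\<bar> \<le> M" if "\<bar>s\<bar> \<le> \<delta>" for s
      using M \<open>a \<in> A\<close> that by (simp add: abs_le_iff)
    ultimately have "\<bar>D 0 (a, t)\<bar> \<le> M / fact n * \<bar>t\<bar> ^ n"
      using Maclaurin_bound_if_derivatives_vanish_at_0[of n \<delta> "\<lambda>k t. D k (a, t)", OF deriv_a]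
        \<open>\<bar>t\<bar> \<le> \<delta>\<close> by blast
    then show "\<bar>g (a, t)\<bar> \<le> M / fact n * \<bar>t\<bar> ^ n"
      using \<open>D 0 = g\<close> by simp
  qed
qed

lemma const_along_path:
  fixes K :: "'a::real_normed_vector \<Rightarrow> real"
  assumes "a \<le> b"
    and path: "\<And>\<tau>. \<tau> \<in> {a..b} \<Longrightarrow> (\<gamma> has_vector_derivative \<gamma>' \<tau>) (at \<tau>)"
    and K: "\<And>\<tau>. \<tau> \<in> {a..b} \<Longrightarrow> (K has_derivative K' (\<gamma> \<tau>)) (at (\<gamma> \<tau>))"
    and tangent: "\<And>\<tau>. \<tau> \<in> {a<..<b} \<Longrightarrow> K' (\<gamma> \<tau>) (\<gamma>' \<tau>) = 0"
  shows "K (\<gamma> a) = K (\<gamma> b)"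
proof (cases "a = b")
  case False
  with \<open>a \<le> b\<close> have "a < b" by simp
  have deriv: "((\<lambda>t. K (\<gamma> t)) has_real_derivative K' (\<gamma> \<tau>) (\<gamma>' \<tau>)) (at \<tau>)"
    if "\<tau> \<in> {a..b}" for \<tau>
  proof -
    have "(K \<circ> \<gamma> has_vector_derivative K' (\<gamma> \<tau>) (\<gamma>' \<tau>)) (at \<tau>)"
      using vector_derivative_diff_chain_within[OF path has_derivative_at_withinI[OF K]] that
      by simp
    then show ?thesis
      by (simp add: o_def has_real_derivative_iff_has_vector_derivative)
  qed
  then have "continuous_on {a..b} (\<lambda>t. K (\<gamma> t))"
    by (meson DERIV_isCont continuous_at_imp_continuous_on)
  moreover have "((\<lambda>t. K (\<gamma> t)) has_real_derivative 0) (at \<tau>)" if "a < \<tau>" "\<tau> < b" for \<tau>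
    using deriv[of \<tau>] tangent[of \<tau>] that by simp
  ultimately show ?thesis
    using DERIV_isconst_end[OF \<open>a < b\<close>] by metis
qed simp

lemma const_on_segment:
  fixes K :: "'a::real_normed_vector \<Rightarrow> real"
  assumes "convex S" and "a \<in> S" and "b \<in> S"
    and K: "\<And>p. p \<in> S \<Longrightarrow> (K has_derivative K' p) (at p)"
    and tangent: "\<And>\<tau>. 0 < \<tau> \<Longrightarrow> \<tau> < 1 \<Longrightarrow> a + \<tau> *\<^sub>R (b - a) \<in> S \<Longrightarrow>
      K' (a + \<tau> *\<^sub>R (b - a)) (b - a) = 0"
  shows "K a = K b"
proof -
  have in_S: "a + \<tau> *\<^sub>R (b - a) \<in> S" if "\<tau> \<in> {0..1}" for \<tau>
    using convexD_alt[OF assms(1-3), of \<tau>] that by (simp add: algebra_simps)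
  have "K ((\<lambda>\<tau>. a + \<tau> *\<^sub>R (b - a)) 0) = K ((\<lambda>\<tau>. a + \<tau> *\<^sub>R (b - a)) 1)"
  proof (rule const_along_path[where \<gamma>' = "\<lambda>_. b - a" and K' = K'])
    show "((\<lambda>\<tau>. a + \<tau> *\<^sub>R (b - a)) has_vector_derivative b - a) (at \<tau>)" for \<tau>
      by (auto intro!: derivative_eq_intros)
  qed (use in_S K tangent in auto)
  then show ?thesis by simp
qed

lemma bounded_linear_phase_coordinates:
  assumes "bounded_linear (L :: phase \<Rightarrow> real)"
  shows "L (a, b, c, d) = a * L dx + b * L dy + c * L dxi + d * L deta"
proof -
  have "(a, b, c, d) = a *\<^sub>R dx + b *\<^sub>R dy + c *\<^sub>R dxi + d *\<^sub>R deta"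
    by (simp add: dx_def dy_def dxi_def deta_def)
  then show ?thesis
    using assms by (simp add: linear_simps)
qed

text \<open>\<open>(1, 0, 0, 0)\<close> and \<open>(0, y, 0, - eta)\<close> are the Hamiltonian vector fields of \<open>xi\<close> and
  \<open>y * eta\<close>, so these brackets are derivatives of \<open>K\<close> along the two flows.\<close>

lemma poisson_xi:
  assumes "(K has_derivative K') (at p)"
  shows "poisson K (\<lambda>(x, y, xi, eta). xi) p = - K' (1, 0, 0, 0)"
proof -
  have "((\<lambda>(x, y, xi, eta). xi) has_derivative (\<lambda>(x, y, xi, eta). xi)) (at p)"
    unfolding case_prod_beta by (auto intro!: derivative_eq_intros)
  then have "frechet_derivative (\<lambda>(x, y, xi, eta). xi) (at p) = (\<lambda>(x, y, xi, eta). xi)"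
    by (rule frechet_derivative_at[symmetric])
  moreover have "frechet_derivative K (at p) = K'"
    using frechet_derivative_at[OF assms] by simp
  ultimately show ?thesis
    by (simp add: poisson_def dx_def dy_def dxi_def deta_def)
qed

lemma poisson_y_eta:
  assumes "(K has_derivative K') (at (x, y, xi, eta))"
  shows "poisson K (\<lambda>(x, y, xi, eta). y * eta) (x, y, xi, eta) = - K' (0, y, 0, - eta)"
proof -
  have "((\<lambda>(x, y, xi, eta). y * eta) has_derivative (\<lambda>(h, k, l, m). y * m + k * eta))
      (at (x, y, xi, eta))"
    unfolding case_prod_beta by (auto intro!: derivative_eq_intros)
  then have "frechet_derivative (\<lambda>(x, y, xi, eta). y * eta) (at (x, y, xi, eta)) =
      (\<lambda>(h, k, l, m). y * m + k * eta)"
    by (rule frechet_derivative_at[symmetric])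
  moreover have "frechet_derivative K (at (x, y, xi, eta)) = K'"
    using frechet_derivative_at[OF assms] by simp
  moreover have "K' (0, y, 0, - eta) = y * K' dy - eta * K' deta"
    using bounded_linear_phase_coordinates[OF has_derivative_bounded_linear[OF assms]] by simp
  ultimately show ?thesis
    by (simp add: poisson_def dx_def dy_def dxi_def deta_def)
qed

definition phase_cube :: "real \<Rightarrow> real \<Rightarrow> phase set" where
  "phase_cube x0 r = {x0 - r<..<x0 + r} \<times> {-r<..<r} \<times> {-r<..<r} \<times> {-r<..<r}"

lemma mem_phase_cube [simp]:
  "(x, y, xi, eta) \<in> phase_cube x0 r \<longleftrightarrow> \<bar>x - x0\<bar> < r \<and> \<bar>y\<bar> < r \<and> \<bar>xi\<bar> < r \<and> \<bar>eta\<bar> < r"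
  by (auto simp: phase_cube_def abs_less_iff)

lemma open_phase_cube: "open (phase_cube x0 r)"
  by (simp add: phase_cube_def open_Times)

lemma convex_phase_cube: "convex (phase_cube x0 r)"
  by (simp add: phase_cube_def convex_Times)

lemma phase_cube_mono: "s \<le> r \<Longrightarrow> phase_cube x0 s \<subseteq> phase_cube x0 r"
  by (auto simp: phase_cube_def)

lemma phase_cube_subset_ball:
  assumes "4 * r \<le> e"
  shows "phase_cube x0 r \<subseteq> ball (x0, 0, 0, 0) e"
proof clarify
  fix x y xi eta
  assume "(x, y, xi, eta) \<in> phase_cube x0 r"
  then have "\<bar>x0 - x\<bar> + (\<bar>y\<bar> + (\<bar>xi\<bar> + \<bar>eta\<bar>)) < e"
    using assms by auto
  moreover have "norm (x0 - x, - y, - xi, - eta) \<le> \<bar>x0 - x\<bar> + (\<bar>y\<bar> + (\<bar>xi\<bar> + \<bar>eta\<bar>))"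
    using norm_Pair_le[of "x0 - x" "(- y, - xi, - eta)"] norm_Pair_le[of "- y" "(- xi, - eta)"]
      norm_Pair_le[of "- xi" "- eta"]
    by simp
  ultimately show "(x, y, xi, eta) \<in> ball (x0, 0, 0, 0) e"
    by (simp add: dist_norm)
qed

locale first_integral_xi_yeta =
  fixes K :: "phase \<Rightarrow> real" and x0 r :: real
  assumes smooth: "smooth_on K (phase_cube x0 r)"
    and poisson_K_xi: "\<And>p. p \<in> phase_cube x0 r \<Longrightarrow> poisson K (\<lambda>(x, y, xi, eta). xi) p = 0"
    and poisson_K_y_eta:
      "\<And>p. p \<in> phase_cube x0 r \<Longrightarrow> poisson K (\<lambda>(x, y, xi, eta). y * eta) p = 0"
begin

abbreviation dK :: "phase \<Rightarrow> phase \<Rightarrow> real" where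
  "dK p \<equiv> frechet_derivative K (at p)"

lemma has_derivative_dK: "p \<in> phase_cube x0 r \<Longrightarrow> (K has_derivative dK p) (at p)"
proof -
  have "Ck_on (Suc 0) K (phase_cube x0 r)"
    using smooth by (simp add: smooth_on_def)
  then show "p \<in> phase_cube x0 r \<Longrightarrow> (K has_derivative dK p) (at p)"
    by (metis Ck_on.simps(2) frechet_derivative_at)
qed

lemma dK_scaleR: "p \<in> phase_cube x0 r \<Longrightarrow> dK p (c *\<^sub>R v) = c * dK p v"
  using linear.scaleR[OF has_derivative_linear[OF has_derivative_dK]] by simp

lemma dK_x: "p \<in> phase_cube x0 r \<Longrightarrow> dK p (1, 0, 0, 0) = 0"
  using poisson_xi[OF has_derivative_dK] poisson_K_xi by fastforce

lemma dK_hyperbolic: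
  "(x, y, xi, eta) \<in> phase_cube x0 r \<Longrightarrow> dK (x, y, xi, eta) (0, y, 0, - eta) = 0"
  using poisson_y_eta[OF has_derivative_dK] poisson_K_y_eta by fastforce

lemma K_indep_x:
  assumes "(x, y, xi, eta) \<in> phase_cube x0 r"
  shows "K (x, y, xi, eta) = K (x0, y, xi, eta)"
proof (rule const_on_segment[OF convex_phase_cube assms _ has_derivative_dK])
  show "(x0, y, xi, eta) \<in> phase_cube x0 r"
    using assms by auto
  fix \<tau> :: real
  let ?p = "(x, y, xi, eta) + \<tau> *\<^sub>R ((x0, y, xi, eta) - (x, y, xi, eta))"
  assume p: "?p \<in> phase_cube x0 r"
  then show "dK ?p ((x0, y, xi, eta) - (x, y, xi, eta)) = 0"
    using dK_scaleR[OF p, of "x0 - x" "(1, 0, 0, 0)"] dK_x[OF p] by (simp add: zero_prod_def)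
qed

lemma K_hyperbolic_invariant:
  assumes "0 < y * Y" and "\<bar>y\<bar> \<le> \<bar>Y\<bar>" and "(x0, Y, xi, eta) \<in> phase_cube x0 r"
  shows "K (x0, y, xi, eta) = K (x0, Y, xi, y * eta / Y)"
proof -
  define T where "T = ln (Y / y)"
  have "y \<noteq> 0"
    using assms(1) by auto
  have "0 < Y / y"
    using assms(1) by (auto simp: zero_less_divide_iff zero_less_mult_iff)
  then have ratio: "Y / y = \<bar>Y\<bar> / \<bar>y\<bar>"
    by (metis abs_divide abs_of_pos)
  then have "1 \<le> Y / y"
    using assms(2) \<open>y \<noteq> 0\<close> by simp
  then have "0 \<le> T" and exp_T: "exp T = Y / y"
    using \<open>0 < Y / y\<close> by (simp_all add: T_def)
  define \<gamma> where "\<gamma> \<tau> = (x0, y * exp \<tau>, xi, eta * exp (- \<tau>))" for \<tau>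
  have \<gamma>_in: "\<gamma> \<tau> \<in> phase_cube x0 r" if "\<tau> \<in> {0..T}" for \<tau>
  proof -
    have "\<bar>y\<bar> * exp \<tau> \<le> \<bar>y\<bar> * (\<bar>Y\<bar> / \<bar>y\<bar>)"
    proof (intro mult_left_mono)
      show "exp \<tau> \<le> \<bar>Y\<bar> / \<bar>y\<bar>"
        using that exp_T ratio exp_le_cancel_iff[of \<tau> T] by simp
    qed simp
    also have "\<dots> = \<bar>Y\<bar>"
      using \<open>y \<noteq> 0\<close> by simp
    finally have "\<bar>y * exp \<tau>\<bar> \<le> \<bar>Y\<bar>"
      by (simp add: abs_mult)
    moreover have "\<bar>eta * exp (- \<tau>)\<bar> \<le> \<bar>eta\<bar>"
      using that by (simp add: abs_mult mult_left_le)
    ultimately show ?thesis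
      using assms(3) by (simp add: \<gamma>_def)
  qed
  have "K (\<gamma> 0) = K (\<gamma> T)"
  proof (rule const_along_path[OF \<open>0 \<le> T\<close>, where K' = dK
        and \<gamma>' = "\<lambda>\<tau>. (0, y * exp \<tau>, 0, - (eta * exp (- \<tau>)))"])
    show "(\<gamma> has_vector_derivative (0, y * exp \<tau>, 0, - (eta * exp (- \<tau>)))) (at \<tau>)" for \<tau>
      unfolding \<gamma>_def
      by (intro has_vector_derivative_Pair)
        (auto intro!: derivative_eq_intros simp flip: has_real_derivative_iff_has_vector_derivative)
    show "(K has_derivative dK (\<gamma> \<tau>)) (at (\<gamma> \<tau>))" if "\<tau> \<in> {0..T}" for \<tau>
      using has_derivative_dK \<gamma>_in that by blast
    show "dK (\<gamma> \<tau>) (0, y * exp \<tau>, 0, - (eta * exp (- \<tau>))) = 0" if "\<tau> \<in> {0<..<T}" for \<tau>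
      using dK_hyperbolic[of x0 "y * exp \<tau>" xi "eta * exp (- \<tau>)"] \<gamma>_in[of \<tau>] that
      by (simp add: \<gamma>_def)
  qed
  moreover have "\<gamma> T = (x0, Y, xi, y * eta / Y)"
    using \<open>y \<noteq> 0\<close> by (simp add: \<gamma>_def exp_T exp_minus)
  ultimately show ?thesis
    by (simp add: \<gamma>_def)
qed

text \<open>On the two axis segments the field \<open>(0, y, 0, - eta)\<close> is a nonzero multiple of the
  direction of the segment except at its initial point, so \<open>K\<close> is constant along them.\<close>

lemma K_zero_section:
  assumes "\<bar>xi\<bar> < r" and "\<bar>eta\<bar> < r" and "\<bar>c\<bar> < r"
  shows "K (x0, 0, xi, eta) = K (x0, c, xi, 0)"
proof -
  have "K (x0, 0, xi, 0) = K (x0, 0, xi, eta)"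
  proof (rule const_on_segment[OF convex_phase_cube _ _ has_derivative_dK])
    fix \<tau> :: real
    let ?p = "(x0, 0, xi, 0) + \<tau> *\<^sub>R ((x0, 0, xi, eta) - (x0, 0, xi, 0))"
    assume "0 < \<tau>" and p: "?p \<in> phase_cube x0 r"
    have "?p = (x0, 0, xi, \<tau> * eta)" by simp
    then have "dK ?p (0, 0, 0, - (\<tau> * eta)) = 0"
      using dK_hyperbolic p by fastforce
    then show "dK ?p ((x0, 0, xi, eta) - (x0, 0, xi, 0)) = 0"
      using dK_scaleR[OF p, of "- 1 / \<tau>" "(0, 0, 0, - (\<tau> * eta))"] \<open>0 < \<tau>\<close>
      by (simp add: zero_prod_def)
  qed (use assms in auto)
  also have "K (x0, 0, xi, 0) = K (x0, c, xi, 0)"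
  proof (rule const_on_segment[OF convex_phase_cube _ _ has_derivative_dK])
    fix \<tau> :: real
    let ?p = "(x0, 0, xi, 0) + \<tau> *\<^sub>R ((x0, c, xi, 0) - (x0, 0, xi, 0))"
    assume "0 < \<tau>" and p: "?p \<in> phase_cube x0 r"
    have "?p = (x0, \<tau> * c, xi, 0)" by simp
    then have "dK ?p (0, \<tau> * c, 0, 0) = 0"
      using dK_hyperbolic[of x0 "\<tau> * c" xi 0] p by simp
    then show "dK ?p ((x0, c, xi, 0) - (x0, 0, xi, 0)) = 0"
      using dK_scaleR[OF p, of "1 / \<tau>" "(0, \<tau> * c, 0, 0)"] \<open>0 < \<tau>\<close>
      by (simp add: zero_prod_def)
  qed (use assms in auto)
  finally show ?thesis ..
qed

text \<open>\<open>side s\<close> and \<open>side (- s)\<close> are the germs \<open>f\<^sub>+\<close> and \<open>f\<^sub>-\<close>: \<open>K\<close> on the slice \<open>x = x0\<close>,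
  \<open>y = Y\<close>, reparametrised by \<open>t = Y * eta\<close>.\<close>

definition side :: "real \<Rightarrow> real \<times> real \<Rightarrow> real" where
  "side Y w = K (x0, Y, fst w, snd w / Y)"

lemma K_eq_side:
  assumes "(x, y, xi, eta) \<in> phase_cube x0 r" and "\<bar>y\<bar> \<le> s" and "s < r"
  shows "K (x, y, xi, eta) = (if y \<ge> 0 then side s (xi, y * eta) else side (- s) (xi, y * eta))"
proof -
  have cube: "\<bar>xi\<bar> < r" "\<bar>eta\<bar> < r" "\<bar>s\<bar> < r"
    using assms by auto
  consider "0 < y" | "y < 0" | "y = 0"
    by linarith
  then have "K (x0, y, xi, eta) =
      (if y \<ge> 0 then side s (xi, y * eta) else side (- s) (xi, y * eta))"
  proof cases
    case 1
    then show ?thesis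
      using K_hyperbolic_invariant[of y s xi eta] assms(2) cube by (simp add: side_def)
  next
    case 2
    then show ?thesis
      using K_hyperbolic_invariant[of y "- s" xi eta] assms(2) cube
      by (simp add: side_def mult_neg_pos)
  next
    case 3
    then show ?thesis
      using K_zero_section[of xi eta s] cube by (simp add: side_def)
  qed
  then show ?thesis
    using K_indep_x[OF assms(1)] by simp
qed

lemma K_eq_side_on_subcube:
  assumes "(x, y, xi, eta) \<in> phase_cube x0 s" and "0 < s" and "s < r"
  shows "(xi, y * eta) \<in> {-r<..<r} \<times> {-(r * s)<..<r * s}"
    and "K (x, y, xi, eta) = (if y \<ge> 0 then side s (xi, y * eta) else side (- s) (xi, y * eta))"
proof -
  have "\<bar>y\<bar> * \<bar>eta\<bar> < s * r"
    using assms by (intro mult_strict_mono) auto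
  then have "\<bar>y * eta\<bar> < r * s"
    by (simp add: abs_mult mult.commute)
  then show "(xi, y * eta) \<in> {-r<..<r} \<times> {-(r * s)<..<r * s}"
    using assms by (auto simp: abs_less_iff)
  show "K (x, y, xi, eta) = (if y \<ge> 0 then side s (xi, y * eta) else side (- s) (xi, y * eta))"
    using K_eq_side[of x y xi eta s] assms by auto
qed

lemma smooth_on_side:
  assumes "0 < \<bar>Y\<bar>" and "\<bar>Y\<bar> < r"
  shows "smooth_on (side Y) ({-r<..<r} \<times> {-(r * \<bar>Y\<bar>)<..<r * \<bar>Y\<bar>})"
proof -
  have "smooth_on (\<lambda>w. K ((0, 0, fst w, snd w / Y) + (x0, Y, 0, 0)))
      ({-r<..<r} \<times> {-(r * \<bar>Y\<bar>)<..<r * \<bar>Y\<bar>})"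
  proof (rule smooth_on_compose_affine[OF _ smooth])
    show "bounded_linear (\<lambda>w::real \<times> real. (0::real, 0::real, fst w, snd w / Y))"
      by (intro bounded_linear_intros bounded_linear_compose[OF bounded_linear_divide])
    fix w :: "real \<times> real"
    assume "w \<in> {-r<..<r} \<times> {-(r * \<bar>Y\<bar>)<..<r * \<bar>Y\<bar>}"
    then have "\<bar>fst w\<bar> < r" and "\<bar>snd w\<bar> / \<bar>Y\<bar> < r"
      using assms(1) by (auto simp: mem_Times_iff abs_less_iff divide_less_eq)
    then show "(0, 0, fst w, snd w / Y) + (x0, Y, 0, 0) \<in> phase_cube x0 r"
      using assms by (simp add: abs_divide)
  qed
  then show ?thesis
    by (simp add: side_def[abs_def])
qed

lemma K_on_slice_line:
  assumes "\<bar>\<sigma>\<bar> = 1" and "0 < s" and "s < r" and "\<bar>xi\<bar> < r" and "\<bar>t\<bar> \<le> s * s"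
  shows "K (x0, t / s, xi, \<sigma> * s) - side s (xi, \<sigma> * t) =
    (if t > 0 then 0 else side (- s) (xi, \<sigma> * t) - side s (xi, \<sigma> * t))"
proof -
  have "\<bar>t / s\<bar> \<le> s"
    using assms by (simp add: abs_divide divide_le_eq)
  consider "t \<noteq> 0" | "t = 0"
    by blast
  then show ?thesis
  proof cases
    case 1
    then show ?thesis
      using K_eq_side[of x0 "t / s" xi "\<sigma> * s" s] \<open>\<bar>t / s\<bar> \<le> s\<close> assms
      by (auto simp: side_def abs_mult mult.commute zero_le_divide_iff)
  next
    case 2
    then show ?thesis
      using K_zero_section[of xi "\<sigma> * s" s] K_zero_section[of xi 0 "- s"] K_zero_section[of xi 0 s]
        assms
      by (simp add: side_def abs_mult)
  qed
qed

lemma side_difference_flat_on_half: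
  assumes "\<bar>\<sigma>\<bar> = 1" and "0 < s" and "s < r" and "0 < \<delta>" and "\<delta> \<le> s * s" and "\<delta> \<le> s"
  shows "\<exists>C. \<forall>xi t. \<bar>xi\<bar> \<le> \<delta> \<and> \<bar>t\<bar> \<le> \<delta> \<and> \<sigma> * t \<le> 0 \<longrightarrow>
      \<bar>side (- s) (xi, t) - side s (xi, t)\<bar> \<le> C * \<bar>t\<bar> ^ n"
proof -
  define g where "g w = K ((0, snd w / s, fst w, 0) + (x0, 0, 0, \<sigma> * s))
    - K ((0, 0, fst w, \<sigma> * snd w / s) + (x0, s, 0, 0))" for w :: "real \<times> real"
  have g_eq: "g (xi, t) = (if t > 0 then 0 else side (- s) (xi, \<sigma> * t) - side s (xi, \<sigma> * t))"
    if "\<bar>xi\<bar> \<le> \<delta>" and "\<bar>t\<bar> \<le> \<delta>" for xi t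
    using K_on_slice_line[of \<sigma> s xi t] that assms by (simp add: g_def side_def)
  have Ck: "Ck_on n K (phase_cube x0 r)"
    using smooth by (simp add: smooth_on_def)
  have "Ck_on n g ({-\<delta>..\<delta>} \<times> {-\<delta>..\<delta>})"
    unfolding g_def
  proof (intro Ck_on_diff Ck_on_compose_affine[OF _ Ck])
    show "bounded_linear (\<lambda>w::real \<times> real. (0::real, snd w / s, fst w, 0::real))"
      and "bounded_linear (\<lambda>w::real \<times> real. (0::real, 0::real, fst w, \<sigma> * snd w / s))"
      by (intro bounded_linear_intros bounded_linear_compose[OF bounded_linear_divide])+
    fix w :: "real \<times> real"
    assume "w \<in> {-\<delta>..\<delta>} \<times> {-\<delta>..\<delta>}"
    then have "\<bar>fst w\<bar> \<le> s" and "\<bar>snd w\<bar> \<le> s * s"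
      using assms by (auto simp: mem_Times_iff abs_le_iff)
    moreover have "s * s < r * s"
      using assms by simp
    ultimately have "\<bar>fst w\<bar> < r" and "\<bar>snd w\<bar> < r * s"
      using assms by linarith+
    then show "(0, snd w / s, fst w, 0) + (x0, 0, 0, \<sigma> * s) \<in> phase_cube x0 r"
      and "(0, 0, fst w, \<sigma> * snd w / s) + (x0, s, 0, 0) \<in> phase_cube x0 r"
      using assms by (auto simp: abs_mult abs_divide pos_divide_less_eq)
  qed
  then have "\<exists>C. \<forall>xi\<in>{-\<delta>..\<delta>}. \<forall>u. \<bar>u\<bar> \<le> \<delta> \<longrightarrow> \<bar>g (xi, u)\<bar> \<le> C * \<bar>u\<bar> ^ n"
  proof (rule Ck_on_flat_if_vanish_right[OF _ compact_Icc \<open>0 < \<delta>\<close>])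
    fix xi u :: real
    assume "xi \<in> {-\<delta>..\<delta>}" and "0 < u" and "u < \<delta>"
    then show "g (xi, u) = 0"
      using g_eq[of xi u] by (simp add: abs_le_iff)
  qed
  then obtain C where C: "\<forall>xi\<in>{-\<delta>..\<delta>}. \<forall>u. \<bar>u\<bar> \<le> \<delta> \<longrightarrow> \<bar>g (xi, u)\<bar> \<le> C * \<bar>u\<bar> ^ n"
    by blast
  show ?thesis
  proof (intro exI[of _ C] allI impI)
    fix xi t :: real
    assume small: "\<bar>xi\<bar> \<le> \<delta> \<and> \<bar>t\<bar> \<le> \<delta> \<and> \<sigma> * t \<le> 0"
    have "\<sigma> * \<sigma> = 1"
      using assms(1) abs_mult_self_eq[of \<sigma>] by simp
    then have u: "\<sigma> * (\<sigma> * t) = t"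
      by (metis mult.assoc mult_1)
    have abs_u: "\<bar>\<sigma> * t\<bar> = \<bar>t\<bar>"
      using assms(1) by (simp add: abs_mult)
    have "xi \<in> {-\<delta>..\<delta>}" and "\<bar>\<sigma> * t\<bar> \<le> \<delta>"
      using small abs_u by (simp_all add: abs_le_iff)
    with C have "\<bar>g (xi, \<sigma> * t)\<bar> \<le> C * \<bar>\<sigma> * t\<bar> ^ n"
      by blast
    moreover have "g (xi, \<sigma> * t) = side (- s) (xi, t) - side s (xi, t)"
      using g_eq[of xi "\<sigma> * t"] small \<open>\<bar>\<sigma> * t\<bar> \<le> \<delta>\<close> by (simp add: u)
    ultimately show "\<bar>side (- s) (xi, t) - side s (xi, t)\<bar> \<le> C * \<bar>t\<bar> ^ n"
      by (simp add: abs_u)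
  qed
qed

lemma sides_flat:
  assumes "0 < s" and "s < r" and "0 < \<delta>" and "\<delta> \<le> s * s" and "\<delta> \<le> s"
  shows "\<exists>C. \<forall>xi t. \<bar>xi\<bar> \<le> \<delta> \<and> \<bar>t\<bar> \<le> \<delta> \<longrightarrow>
      \<bar>side (- s) (xi, t) - side s (xi, t)\<bar> \<le> C * \<bar>t\<bar> ^ n"
proof -
  obtain C1 C2 where
    C1: "\<forall>xi t. \<bar>xi\<bar> \<le> \<delta> \<and> \<bar>t\<bar> \<le> \<delta> \<and> 1 * t \<le> 0 \<longrightarrow>
      \<bar>side (- s) (xi, t) - side s (xi, t)\<bar> \<le> C1 * \<bar>t\<bar> ^ n" and
    C2: "\<forall>xi t. \<bar>xi\<bar> \<le> \<delta> \<and> \<bar>t\<bar> \<le> \<delta> \<and> - 1 * t \<le> 0 \<longrightarrow>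
      \<bar>side (- s) (xi, t) - side s (xi, t)\<bar> \<le> C2 * \<bar>t\<bar> ^ n"
    using side_difference_flat_on_half[OF _ assms] by (metis abs_minus_cancel abs_one)
  show ?thesis
  proof (intro exI[of _ "max C1 C2"] allI impI)
    fix xi t
    assume small: "\<bar>xi\<bar> \<le> \<delta> \<and> \<bar>t\<bar> \<le> \<delta>"
    have "\<bar>side (- s) (xi, t) - side s (xi, t)\<bar> \<le> C1 * \<bar>t\<bar> ^ n \<or>
        \<bar>side (- s) (xi, t) - side s (xi, t)\<bar> \<le> C2 * \<bar>t\<bar> ^ n"
      using C1 C2 small by (cases "t \<le> 0") auto
    moreover have "C * \<bar>t\<bar> ^ n \<le> max C1 C2 * \<bar>t\<bar> ^ n" if "C = C1 \<or> C = C2" for C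
      using that by (intro mult_right_mono) auto
    ultimately show "\<bar>side (- s) (xi, t) - side s (xi, t)\<bar> \<le> max C1 C2 * \<bar>t\<bar> ^ n"
      by fastforce
  qed
qed

end

theorem lemma2p9:
  fixes K :: "phase \<Rightarrow> real" and U :: "phase set" and x0 :: real
  assumes "open U" and "(x0, 0, 0, 0) \<in> U"
    and "smooth_on K U"
    and "\<forall>p\<in>U. poisson K (\<lambda>(x, y, xi, eta). xi) p = 0"
    and "\<forall>p\<in>U. poisson K (\<lambda>(x, y, xi, eta). y * eta) p = 0"
  shows "\<exists>V W fp fm \<delta>. open V \<and> (x0, 0, 0, 0) \<in> V \<and> V \<subseteq> U
     \<and> open W \<and> (0::real, 0::real) \<in> W
     \<and> smooth_on fp W \<and> smooth_on fm W
     \<and> \<delta> > 0 \<and> {(xi, t). \<bar>xi\<bar> \<le> \<delta> \<and> \<bar>t\<bar> \<le> \<delta>} \<subseteq> W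
     \<and> (\<forall>N::nat. \<exists>C. \<forall>xi t. \<bar>xi\<bar> \<le> \<delta> \<and> \<bar>t\<bar> \<le> \<delta> \<longrightarrow>
            \<bar>fm (xi, t) - fp (xi, t)\<bar> \<le> C * \<bar>t\<bar> ^ N)
     \<and> (\<forall>(x, y, xi, eta)\<in>V. (xi, y * eta) \<in> W \<and>
            K (x, y, xi, eta) = (if y \<ge> 0 then fp (xi, y * eta) else fm (xi, y * eta)))"
proof -
  obtain e where "0 < e" and "ball (x0, 0, 0, 0) e \<subseteq> U"
    using assms(1,2) openE by blast
  define r where "r = e / 4"
  have "0 < r" and cube_U: "phase_cube x0 r \<subseteq> U"
    using \<open>0 < e\<close> \<open>ball (x0, 0, 0, 0) e \<subseteq> U\<close> phase_cube_subset_ball[of r e x0]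
    by (auto simp: r_def)
  interpret first_integral_xi_yeta K x0 r
    using smooth_on_subset[OF assms(3) cube_U] assms(4,5) cube_U by unfold_locales auto
  define s where "s = r / 2"
  define \<delta> where "\<delta> = min (s * s) s"
  have "0 < s" "s < r" "0 < \<delta>" "\<delta> \<le> s * s" "\<delta> \<le> s" "s * s < r * s"
    using \<open>0 < r\<close> by (auto simp: s_def \<delta>_def)
  define W where "W = {-r<..<r} \<times> {-(r * s)<..<r * s}"
  show ?thesis
  proof (rule exI[of _ "phase_cube x0 s"], rule exI[of _ W], rule exI[of _ "side s"],
      rule exI[of _ "side (- s)"], rule exI[of _ \<delta>], intro conjI allI)
    show "phase_cube x0 s \<subseteq> U"
      using phase_cube_mono[of s r x0] \<open>s < r\<close> cube_U by auto
    show "smooth_on (side s) W" and "smooth_on (side (- s)) W"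
      using smooth_on_side[of s] smooth_on_side[of "- s"] \<open>0 < s\<close> \<open>s < r\<close>
      by (simp_all add: W_def)
    show "{(xi, t). \<bar>xi\<bar> \<le> \<delta> \<and> \<bar>t\<bar> \<le> \<delta>} \<subseteq> W"
      using \<open>\<delta> \<le> s\<close> \<open>\<delta> \<le> s * s\<close> \<open>s < r\<close> \<open>s * s < r * s\<close>
      by (auto simp: W_def abs_le_iff)
    show "\<exists>C. \<forall>xi t. \<bar>xi\<bar> \<le> \<delta> \<and> \<bar>t\<bar> \<le> \<delta> \<longrightarrow>
        \<bar>side (- s) (xi, t) - side s (xi, t)\<bar> \<le> C * \<bar>t\<bar> ^ N" for N
      using sides_flat \<open>0 < s\<close> \<open>s < r\<close> \<open>0 < \<delta>\<close> \<open>\<delta> \<le> s * s\<close> \<open>\<delta> \<le> s\<close> by blast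
  qed (use open_phase_cube K_eq_side_on_subcube \<open>0 < s\<close> \<open>s < r\<close> \<open>0 < \<delta>\<close>
      in \<open>auto simp: W_def open_Times\<close>)
qed

end
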